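(* Let $\ket\psi$ be a pure $n$-qubit state, $t\ge1$, and $p_t$ the output distribution of the $t$-copy hidden cut circuit on $\ket\psi$. Then for every $\bm s\in\{0,1\}^n$, $$\mathbb E_{\bm x\sim p_t}[\bm x\cdot\bm s] = \tfrac12\bigl(1-P(\bm s)^t\bigr).$$
   Context: Subsystems are bitstrings $\bm s\in\{0,1\}^n$ (qubit $j$ included iff $s_j=1$); $\bm x\cdot\bm s\in\{0,1\}$ is the dot product mod 2. $\rho_{\bm s}=\mathrm{Tr}_{\bar{\bm s}}\ket\psi\bra\psi$ and $P(\bm s)=\mathrm{Tr}(\rho_{\bm s}^2)$ (with $P(\bm 0)=1$). $\mathrm{SWAP}_{\bm s}$ swaps the qubits of subsystem $\bm s$ between two copies of the $n$-qubit space. The $t$-copy hidden cut circuit: an $n$-qubit group register is initialized to $\ket{0^n}$ and a state register to $(\ket\psi\ket\psi)^{\otimes t}$; apply $H^{\otimes n}$ to the group register; apply $\sum_{\bm s}\ket{\bm s}\bra{\bm s}\otimes \mathrm{SWAP}_{\bm s}^{\otimes t}$; apply $H^{\otimes n}$ to the group register; measure the group register in the computational basis; $p_t$ denotes the resulting distribution. *)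

theory Defs
  imports Complex_Main
begin

text \<open>Computational basis states of n qubits: bitstrings of length n.\<close>
definition bits :: "nat \<Rightarrow> bool list set" where
  "bits n = {xs. length xs = n}"

definition dot2 :: "bool list \<Rightarrow> bool list \<Rightarrow> nat" where
  "dot2 x s = card {j. j < length x \<and> x ! j \<and> s ! j} mod 2"

definition pure_state :: "nat \<Rightarrow> (bool list \<Rightarrow> complex) \<Rightarrow> bool" where
  "pure_state n \<psi> \<longleftrightarrow> (\<Sum>x\<in>bits n. (cmod (\<psi> x))^2) = 1"

definition sub_bits :: "nat \<Rightarrow> bool list \<Rightarrow> bool list set" where
  "sub_bits n s = {u \<in> bits n. \<forall>j<n. \<not> s ! j \<longrightarrow> \<not> u ! j}"

definition comp_bits :: "nat \<Rightarrow> bool list \<Rightarrow> bool list set" where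
  "comp_bits n s = {w \<in> bits n. \<forall>j<n. s ! j \<longrightarrow> \<not> w ! j}"

definition merge_bits :: "bool list \<Rightarrow> bool list \<Rightarrow> bool list" where
  "merge_bits u w = map2 (\<or>) u w"

text \<open>Reduced density matrix rho_s = Tr_{complement of s} |psi><psi|, indexed by
  bitstrings of the qubits in s (zero outside s).\<close>
definition rho :: "nat \<Rightarrow> (bool list \<Rightarrow> complex) \<Rightarrow> bool list \<Rightarrow> bool list \<Rightarrow> bool list \<Rightarrow> complex" where
  "rho n \<psi> s u v = (\<Sum>w\<in>comp_bits n s. \<psi> (merge_bits u w) * cnj (\<psi> (merge_bits v w)))"

definition purity :: "nat \<Rightarrow> (bool list \<Rightarrow> complex) \<Rightarrow> bool list \<Rightarrow> real" where
  "purity n \<psi> s = Re (\<Sum>u\<in>sub_bits n s. \<Sum>v\<in>sub_bits n s. rho n \<psi> s u v * rho n \<psi> s v u)"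

text \<open>State register: 2t copies of the n-qubit space; copies 2i and 2i+1 form pair i.\<close>
definition reg_bits :: "nat \<Rightarrow> nat \<Rightarrow> bool list list set" where
  "reg_bits n t = {rs. length rs = 2 * t \<and> (\<forall>r\<in>set rs. length r = n)}"

definition partner :: "nat \<Rightarrow> nat" where
  "partner k = (if even k then k + 1 else k - 1)"

text \<open>Action of SWAP_s^{tensor t} on basis states of the state register.\<close>
definition swap_map :: "nat \<Rightarrow> bool list \<Rightarrow> bool list list \<Rightarrow> bool list list" where
  "swap_map n s rs = map (\<lambda>k. map (\<lambda>j. if s ! j then rs ! partner k ! j else rs ! k ! j) [0..<n])
                        [0..<length rs]"

text \<open>Joint states of (group register, state register).\<close>
type_synonym jstate = "bool list \<Rightarrow> bool list list \<Rightarrow> complex"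

definition init_state :: "nat \<Rightarrow> nat \<Rightarrow> (bool list \<Rightarrow> complex) \<Rightarrow> jstate" where
  "init_state n t \<psi> g rs =
     (if g = replicate n False then 1 else 0) * (\<Prod>k<2 * t. \<psi> (rs ! k))"

definition hadamard_group :: "nat \<Rightarrow> nat \<Rightarrow> jstate \<Rightarrow> jstate" where
  "hadamard_group n t \<phi> g rs =
     (\<Sum>g'\<in>bits n. complex_of_real (1 / sqrt (2 ^ n) * (-1) ^ dot2 g g') * \<phi> g' rs)"

text \<open>The controlled swap  sum_s |s><s| \<otimes> SWAP_s^{tensor t}.\<close>
definition ctrl_swap :: "nat \<Rightarrow> nat \<Rightarrow> jstate \<Rightarrow> jstate" where
  "ctrl_swap n t \<phi> g rs =
     (\<Sum>rs'\<in>reg_bits n t. (if rs = swap_map n g rs' then 1 else 0) * \<phi> g rs')"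

definition final_state :: "nat \<Rightarrow> nat \<Rightarrow> (bool list \<Rightarrow> complex) \<Rightarrow> jstate" where
  "final_state n t \<psi> =
     hadamard_group n t (ctrl_swap n t (hadamard_group n t (init_state n t \<psi>)))"

definition hidden_cut_dist :: "nat \<Rightarrow> nat \<Rightarrow> (bool list \<Rightarrow> complex) \<Rightarrow> bool list \<Rightarrow> real" where
  "hidden_cut_dist n t \<psi> x = (\<Sum>rs\<in>reg_bits n t. (cmod (final_state n t \<psi> x rs))^2)"

end

theory Submission
  imports Defs
begin

text \<open>Write \<open>\<Psi>\<close> for the amplitude of \<open>\<psi>\<^sup>\<otimes>\<^sup>2\<^sup>t\<close> and \<open>\<sigma>\<^sub>g\<close> for \<open>SWAP\<^sub>g\<^sup>\<otimes>\<^sup>t\<close>. After the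
  first Hadamard layer the group register is uniform, so the final amplitude at \<open>(x, r)\<close> is
  \<open>2\<^sup>-\<^sup>n\<close> times the Walsh transform at \<open>x\<close> of \<open>g \<mapsto> \<Psi>(\<sigma>\<^sub>g r)\<close>. Orthogonality of the Walsh
  characters, together with \<open>\<sigma>\<^sub>g \<sigma>\<^sub>h = \<sigma>\<^sub>g\<^sub>\<oplus>\<^sub>h\<close>, turns \<open>E[(-1)\<^sup>x\<^sup>\<cdot>\<^sup>s]\<close> into the overlap
  \<open>\<Sum>\<^sub>r \<Psi>(r) cnj \<Psi>(\<sigma>\<^sub>s r)\<close>. This factorises over the \<open>t\<close> pairs of copies into the \<open>t\<close>-th power
  of the swap-test quantity \<open>\<langle>\<psi>\<psi>|SWAP\<^sub>s|\<psi>\<psi>\<rangle> = P(s)\<close>, and \<open>x\<cdot>s = (1 - (-1)\<^sup>x\<^sup>\<cdot>\<^sup>s)/2\<close>.\<close>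

section \<open>Bitstrings and Walsh characters\<close>

definition xor_bits :: "bool list \<Rightarrow> bool list \<Rightarrow> bool list" where
  "xor_bits g h = map2 (\<noteq>) g h"

definition walsh :: "bool list \<Rightarrow> bool list \<Rightarrow> real" where
  "walsh x a = (-1) ^ dot2 x a"

lemma bits_0: "bits 0 = {[]}"
  by (auto simp: bits_def)

lemma bits_Suc: "bits (Suc n) = (\<lambda>(b, x). b # x) ` (UNIV \<times> bits n)"
  by (auto simp: bits_def length_Suc_conv)

lemma bits_SucE:
  assumes "y \<in> bits (Suc n)"
  obtains b x where "y = b # x" "x \<in> bits n"
  using assms by (auto simp: bits_def length_Suc_conv)

lemma inj_on_Cons_pair: "inj_on (\<lambda>(b, x). b # x) A"
  by (auto simp: inj_on_def)

lemma finite_bits [simp]: "finite (bits n)"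
  by (induction n) (simp_all add: bits_0 bits_Suc)

lemma card_bits: "card (bits n) = 2 ^ n"
  by (induction n) (simp_all add: bits_0 bits_Suc card_image[OF inj_on_Cons_pair] card_cartesian_product)

lemma zero_bits: "replicate n False \<in> bits n"
  by (simp add: bits_def)

lemma xor_bits_bits: "g \<in> bits n \<Longrightarrow> h \<in> bits n \<Longrightarrow> xor_bits g h \<in> bits n"
  by (simp add: bits_def xor_bits_def)

lemma xor_bits_Cons: "xor_bits (c # g) (d # h) = (c \<noteq> d) # xor_bits g h"
  by (simp add: xor_bits_def)

lemma xor_bits_eq_zero_iff:
  "g \<in> bits n \<Longrightarrow> h \<in> bits n \<Longrightarrow> xor_bits g h = replicate n False \<longleftrightarrow> h = g"
  by (auto simp: bits_def xor_bits_def list_eq_iff_nth_eq)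

lemma sum_bits_Suc: "(\<Sum>y\<in>bits (Suc n). f y) = (\<Sum>x\<in>bits n. f (False # x) + f (True # x))"
proof -
  have "(\<Sum>y\<in>bits (Suc n). f y) = (\<Sum>(b, x)\<in>UNIV \<times> bits n. f (b # x))"
    unfolding bits_Suc by (subst sum.reindex[OF inj_on_Cons_pair]) (simp add: case_prod_beta)
  also have "\<dots> = (\<Sum>x\<in>bits n. f (False # x) + f (True # x))"
    by (simp add: sum.cartesian_product[symmetric] sum.swap[of _ UNIV] UNIV_bool sum.distrib)
  finally show ?thesis .
qed

lemma dot2_Cons: "dot2 (b # x) (c # a) = ((if b \<and> c then 1 else 0) + dot2 x a) mod 2"
proof -
  have "{j. j < length (b # x) \<and> (b # x) ! j \<and> (c # a) ! j} =
      (if b \<and> c then {0} else {}) \<union> Suc ` {j. j < length x \<and> x ! j \<and> a ! j}"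
  proof (rule set_eqI)
    fix j
    show "j \<in> {j. j < length (b # x) \<and> (b # x) ! j \<and> (c # a) ! j} \<longleftrightarrow>
        j \<in> (if b \<and> c then {0} else {}) \<union> Suc ` {j. j < length x \<and> x ! j \<and> a ! j}"
      by (cases j) auto
  qed
  then show ?thesis
    by (simp add: dot2_def card_image card_Un_disjoint mod_add_right_eq)
qed

lemma walsh_Cons: "walsh (b # x) (c # a) = (if b \<and> c then -1 else 1) * walsh x a"
  unfolding walsh_def dot2_Cons by (simp add: minus_one_power_iff mod2_eq_if)

lemma walsh_zero: "x \<in> bits n \<Longrightarrow> walsh x (replicate n False) = 1"
proof -
  assume "x \<in> bits n"
  then have no_common_ones: "{j. j < length x \<and> x ! j \<and> replicate n False ! j} = {}"
    by (auto simp: bits_def)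
  show ?thesis by (simp only: walsh_def dot2_def no_common_ones) simp
qed

lemma walsh_mult:
  "x \<in> bits n \<Longrightarrow> g \<in> bits n \<Longrightarrow> h \<in> bits n \<Longrightarrow> walsh x g * walsh x h = walsh x (xor_bits g h)"
proof (induction n arbitrary: x g h)
  case 0
  then show ?case by (simp add: bits_0 walsh_def dot2_def)
next
  case (Suc n)
  obtain b x' where "x = b # x'" "x' \<in> bits n" using Suc.prems(1) by (elim bits_SucE)
  moreover obtain c g' where "g = c # g'" "g' \<in> bits n" using Suc.prems(2) by (elim bits_SucE)
  moreover obtain d h' where "h = d # h'" "h' \<in> bits n" using Suc.prems(3) by (elim bits_SucE)
  ultimately show ?case
    using Suc.IH[of x' g' h'] by (auto simp: xor_bits_Cons walsh_Cons)
qed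

lemma sum_walsh:
  "a \<in> bits n \<Longrightarrow> (\<Sum>x\<in>bits n. walsh x a) = (if a = replicate n False then 2 ^ n else 0)"
proof (induction n arbitrary: a)
  case 0
  then show ?case by (simp add: bits_0 walsh_def dot2_def)
next
  case (Suc n)
  then obtain c a' where a: "a = c # a'" "a' \<in> bits n" by (elim bits_SucE)
  have "(\<Sum>x\<in>bits (Suc n). walsh x a) = (1 + (if c then -1 else 1)) * (\<Sum>x\<in>bits n. walsh x a')"
    unfolding sum_bits_Suc a by (simp add: walsh_Cons sum_distrib_left algebra_simps)
  then show ?case using Suc.IH[OF a(2)] a by auto
qed

lemma sum_walsh_triple:
  assumes "s \<in> bits n" "g \<in> bits n" "h \<in> bits n"
  shows "(\<Sum>x\<in>bits n. walsh x s * walsh x g * walsh x h) = (if h = xor_bits s g then 2 ^ n else 0)"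
proof -
  have "(\<Sum>x\<in>bits n. walsh x s * walsh x g * walsh x h) = (\<Sum>x\<in>bits n. walsh x (xor_bits (xor_bits s g) h))"
    using assms by (intro sum.cong) (simp_all add: walsh_mult xor_bits_bits)
  then show ?thesis
    using assms by (simp add: sum_walsh xor_bits_bits xor_bits_eq_zero_iff)
qed

lemma sum_walsh_mult_transform_sq:
  fixes A :: "bool list \<Rightarrow> complex"
  assumes s: "s \<in> bits n"
  defines "F x \<equiv> \<Sum>g\<in>bits n. of_real (walsh x g) * A g"
  shows "(\<Sum>x\<in>bits n. of_real (walsh x s) * (F x * cnj (F x)))
    = 2 ^ n * (\<Sum>g\<in>bits n. A g * cnj (A (xor_bits s g)))"
proof -
  have "(\<Sum>x\<in>bits n. of_real (walsh x s) * (F x * cnj (F x))) =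
      (\<Sum>x\<in>bits n. \<Sum>g\<in>bits n. \<Sum>h\<in>bits n. of_real (walsh x s * walsh x g * walsh x h) * (A g * cnj (A h)))"
  proof (intro sum.cong refl)
    fix x
    have "F x * cnj (F x) =
        (\<Sum>g\<in>bits n. \<Sum>h\<in>bits n. (of_real (walsh x g) * A g) * (of_real (walsh x h) * cnj (A h)))"
      unfolding F_def cnj_sum sum_product by simp
    then show "of_real (walsh x s) * (F x * cnj (F x)) =
        (\<Sum>g\<in>bits n. \<Sum>h\<in>bits n. of_real (walsh x s * walsh x g * walsh x h) * (A g * cnj (A h)))"
      by (simp add: sum_distrib_left algebra_simps)
  qed
  also have "\<dots> = (\<Sum>g\<in>bits n. \<Sum>x\<in>bits n. \<Sum>h\<in>bits n. of_real (walsh x s * walsh x g * walsh x h) * (A g * cnj (A h)))"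
    by (rule sum.swap)
  also have "\<dots> = (\<Sum>g\<in>bits n. \<Sum>h\<in>bits n. \<Sum>x\<in>bits n. of_real (walsh x s * walsh x g * walsh x h) * (A g * cnj (A h)))"
    by (rule sum.cong[OF refl]) (rule sum.swap)
  also have "\<dots> = (\<Sum>g\<in>bits n. \<Sum>h\<in>bits n. of_real (\<Sum>x\<in>bits n. walsh x s * walsh x g * walsh x h) * (A g * cnj (A h)))"
    by (simp add: of_real_sum sum_distrib_right)
  also have "\<dots> = (\<Sum>g\<in>bits n. \<Sum>h\<in>bits n. if h = xor_bits s g then 2 ^ n * (A g * cnj (A h)) else 0)"
    using s by (intro sum.cong refl) (simp add: sum_walsh_triple)
  also have "\<dots> = 2 ^ n * (\<Sum>g\<in>bits n. A g * cnj (A (xor_bits s g)))"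
    using s by (simp add: sum.delta' xor_bits_bits sum_distrib_left)
  finally show ?thesis .
qed

lemma dot2_eq_walsh: "real (dot2 x s) = (1 - walsh x s) / 2"
  unfolding walsh_def dot2_def by (auto simp: minus_one_power_iff odd_iff_mod_2_eq_one)

section \<open>The swaps on the state register\<close>

definition mix_bits :: "nat \<Rightarrow> bool list \<Rightarrow> bool list \<Rightarrow> bool list \<Rightarrow> bool list" where
  "mix_bits n s p q = map (\<lambda>j. if s ! j then p ! j else q ! j) [0..<n]"

lemma swap_map_Cons2:
  "swap_map n s (a # b # rs) = mix_bits n s b a # mix_bits n s a b # swap_map n s rs"
proof -
  have "partner (Suc (Suc k)) = Suc (Suc (partner k))" for k
    by (auto simp: partner_def)
  then show ?thesis
    by (simp add: swap_map_def mix_bits_def partner_def upt_conv_Cons map_Suc_upt[symmetric] del: upt_Suc)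
qed

lemma reg_bits_0: "reg_bits n 0 = {[]}"
  by (auto simp: reg_bits_def)

lemma reg_bits_Suc:
  "reg_bits n (Suc t) = (\<lambda>(a, b, r). a # b # r) ` (bits n \<times> bits n \<times> reg_bits n t)"
proof (intro equalityI subsetI)
  fix rs assume "rs \<in> reg_bits n (Suc t)"
  then have len: "length rs = Suc (Suc (2 * t))" and entries: "\<forall>r\<in>set rs. length r = n"
    by (auto simp: reg_bits_def)
  then obtain a b r where rs: "rs = a # b # r"
    by (metis length_Suc_conv)
  have "a \<in> bits n" "b \<in> bits n" "r \<in> reg_bits n t"
    using len entries by (auto simp: rs reg_bits_def bits_def)
  then show "rs \<in> (\<lambda>(a, b, r). a # b # r) ` (bits n \<times> bits n \<times> reg_bits n t)"
    unfolding rs by (intro image_eqI[where x="(a, b, r)"]) auto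
qed (auto simp: reg_bits_def bits_def)

lemma inj_on_Cons2: "inj_on (\<lambda>(a, b, r). a # b # r) A"
  by (auto simp: inj_on_def)

lemma finite_reg_bits [simp]: "finite (reg_bits n t)"
  by (induction t) (simp_all add: reg_bits_0 reg_bits_Suc)

lemma sum_reg_bits_Suc:
  "(\<Sum>rs\<in>reg_bits n (Suc t). f rs) = (\<Sum>a\<in>bits n. \<Sum>b\<in>bits n. \<Sum>r\<in>reg_bits n t. f (a # b # r))"
  unfolding reg_bits_Suc
  by (subst sum.reindex[OF inj_on_Cons2]) (simp add: case_prod_beta sum.cartesian_product)

lemma swap_map_reg_bits: "rs \<in> reg_bits n t \<Longrightarrow> swap_map n s rs \<in> reg_bits n t"
  by (auto simp: reg_bits_def swap_map_def)

lemma mix_bits_mix_bits: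
  assumes "length p = n" "length q = n" "g \<in> bits n" "h \<in> bits n"
  shows "mix_bits n g (mix_bits n h p q) (mix_bits n h q p) = mix_bits n (xor_bits g h) q p"
  using assms by (auto simp: mix_bits_def xor_bits_def bits_def intro!: nth_equalityI)

lemma mix_bits_zero: "length q = n \<Longrightarrow> mix_bits n (replicate n False) p q = q"
  by (auto simp: mix_bits_def intro!: nth_equalityI)

lemma swap_map_swap_map:
  assumes "rs \<in> reg_bits n t" "g \<in> bits n" "h \<in> bits n"
  shows "swap_map n g (swap_map n h rs) = swap_map n (xor_bits g h) rs"
  using assms(1)
proof (induction t arbitrary: rs)
  case 0
  then show ?case by (simp add: reg_bits_0 swap_map_def)
next
  case (Suc t)
  then obtain a b r where "rs = a # b # r" "a \<in> bits n" "b \<in> bits n" "r \<in> reg_bits n t"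
    by (auto simp: reg_bits_Suc)
  then show ?case
    using Suc.IH assms(2,3) by (simp add: swap_map_Cons2 mix_bits_mix_bits bits_def)
qed

lemma swap_map_zero: "rs \<in> reg_bits n t \<Longrightarrow> swap_map n (replicate n False) rs = rs"
proof (induction t arbitrary: rs)
  case 0
  then show ?case by (simp add: reg_bits_0 swap_map_def)
next
  case (Suc t)
  then obtain a b r where "rs = a # b # r" "a \<in> bits n" "b \<in> bits n" "r \<in> reg_bits n t"
    by (auto simp: reg_bits_Suc)
  then show ?case
    using Suc.IH by (simp add: swap_map_Cons2 mix_bits_zero bits_def)
qed

lemma swap_map_involution:
  "rs \<in> reg_bits n t \<Longrightarrow> g \<in> bits n \<Longrightarrow> swap_map n g (swap_map n g rs) = rs"
  using xor_bits_eq_zero_iff[of g n g] by (simp add: swap_map_swap_map swap_map_zero)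

section \<open>The output amplitudes\<close>

definition tensor_amp :: "nat \<Rightarrow> (bool list \<Rightarrow> complex) \<Rightarrow> bool list list \<Rightarrow> complex" where
  "tensor_amp t \<psi> rs = (\<Prod>k<2 * t. \<psi> (rs ! k))"

lemma tensor_amp_0: "tensor_amp 0 \<psi> rs = 1"
  by (simp add: tensor_amp_def)

lemma tensor_amp_Cons2: "tensor_amp (Suc t) \<psi> (a # b # r) = \<psi> a * \<psi> b * tensor_amp t \<psi> r"
proof -
  have "2 * Suc t = Suc (Suc (2 * t))" by simp
  then show ?thesis unfolding tensor_amp_def by (simp only: prod.lessThan_Suc_shift) simp
qed

lemma hadamard_group_init_state:
  assumes "g \<in> bits n"
  shows "hadamard_group n t (init_state n t \<psi>) g rs = of_real (1 / sqrt (2 ^ n)) * tensor_amp t \<psi> rs"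
proof -
  let ?z = "replicate n False"
  have "hadamard_group n t (init_state n t \<psi>) g rs =
      (\<Sum>g'\<in>bits n. if g' = ?z then of_real (1 / sqrt (2 ^ n) * walsh g ?z) * tensor_amp t \<psi> rs else 0)"
    unfolding hadamard_group_def init_state_def tensor_amp_def walsh_def by (intro sum.cong) auto
  also have "\<dots> = of_real (1 / sqrt (2 ^ n) * walsh g ?z) * tensor_amp t \<psi> rs"
    by (simp add: sum.delta zero_bits)
  finally show ?thesis
    using walsh_zero[OF assms] by simp
qed

lemma ctrl_swap_apply:
  assumes "g \<in> bits n" "rs \<in> reg_bits n t"
  shows "ctrl_swap n t \<phi> g rs = \<phi> g (swap_map n g rs)"
proof -
  have "ctrl_swap n t \<phi> g rs = (\<Sum>rs'\<in>reg_bits n t. if rs' = swap_map n g rs then \<phi> g rs' else 0)"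
    unfolding ctrl_swap_def
    by (intro sum.cong refl) (metis assms swap_map_involution mult_zero_left mult_1)
  then show ?thesis
    using assms(2) by (simp add: sum.delta swap_map_reg_bits)
qed

lemma final_state_eq_walsh_transform:
  assumes "x \<in> bits n" "rs \<in> reg_bits n t"
  shows "final_state n t \<psi> x rs =
    of_real (1 / 2 ^ n) * (\<Sum>g\<in>bits n. of_real (walsh x g) * tensor_amp t \<psi> (swap_map n g rs))"
  unfolding final_state_def hadamard_group_def[of n t "ctrl_swap n t _"] sum_distrib_left
proof (intro sum.cong refl)
  fix g assume g: "g \<in> bits n"
  have "1 / sqrt (2 ^ n) * (-1) ^ dot2 x g * (1 / sqrt (2 ^ n)) = 1 / 2 ^ n * (walsh x g :: real)"
    by (simp add: walsh_def)
  then show "of_real (1 / sqrt (2 ^ n) * (-1) ^ dot2 x g) * ctrl_swap n t (hadamard_group n t (init_state n t \<psi>)) g rs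
      = of_real (1 / 2 ^ n) * (of_real (walsh x g) * tensor_amp t \<psi> (swap_map n g rs))"
    unfolding ctrl_swap_apply[OF g assms(2)] hadamard_group_init_state[OF g]
    by (metis (no_types, lifting) mult.assoc of_real_mult)
qed

lemma sum_walsh_final_state_sq:
  assumes s: "s \<in> bits n" and rs: "rs \<in> reg_bits n t"
  shows "(\<Sum>x\<in>bits n. of_real (walsh x s) * (final_state n t \<psi> x rs * cnj (final_state n t \<psi> x rs)))
    = of_real (1 / 2 ^ n) * (\<Sum>g\<in>bits n.
        tensor_amp t \<psi> (swap_map n g rs) * cnj (tensor_amp t \<psi> (swap_map n s (swap_map n g rs))))"
proof -
  define A where "A g = tensor_amp t \<psi> (swap_map n g rs)" for g
  define F where "F x = (\<Sum>g\<in>bits n. of_real (walsh x g) * A g)" for x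
  define c :: complex where "c = of_real (1 / 2 ^ n)"
  have "(\<Sum>x\<in>bits n. of_real (walsh x s) * (final_state n t \<psi> x rs * cnj (final_state n t \<psi> x rs)))
      = c * c * (\<Sum>x\<in>bits n. of_real (walsh x s) * (F x * cnj (F x)))"
    unfolding sum_distrib_left
    by (intro sum.cong refl) (simp add: final_state_eq_walsh_transform rs A_def F_def c_def)
  also have "\<dots> = c * c * 2 ^ n * (\<Sum>g\<in>bits n. A g * cnj (A (xor_bits s g)))"
    unfolding F_def sum_walsh_mult_transform_sq[OF s] by simp
  also have "\<dots> = c * (\<Sum>g\<in>bits n. A g * cnj (A (xor_bits s g)))"
    by (simp add: c_def field_simps power2_eq_square)
  finally show ?thesis
    unfolding c_def A_def using s rs by (simp add: swap_map_swap_map)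
qed

section \<open>Swap overlaps and purity\<close>

text \<open>The complex conjugate of \<open>\<langle>\<psi>\<otimes>\<psi>| SWAP\<^sub>s |\<psi>\<otimes>\<psi>\<rangle>\<close> (a real number).\<close>

definition swap_overlap :: "nat \<Rightarrow> (bool list \<Rightarrow> complex) \<Rightarrow> bool list \<Rightarrow> complex" where
  "swap_overlap n \<psi> s = (\<Sum>a\<in>bits n. \<Sum>b\<in>bits n.
     \<psi> a * \<psi> b * cnj (\<psi> (mix_bits n s b a)) * cnj (\<psi> (mix_bits n s a b)))"

definition tensor_swap_overlap :: "nat \<Rightarrow> nat \<Rightarrow> (bool list \<Rightarrow> complex) \<Rightarrow> bool list \<Rightarrow> complex" where
  "tensor_swap_overlap n t \<psi> s =
     (\<Sum>rs\<in>reg_bits n t. tensor_amp t \<psi> rs * cnj (tensor_amp t \<psi> (swap_map n s rs)))"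

lemma tensor_swap_overlap_eq_power: "tensor_swap_overlap n t \<psi> s = swap_overlap n \<psi> s ^ t"
proof (induction t)
  case 0
  then show ?case by (simp add: tensor_swap_overlap_def reg_bits_0 tensor_amp_0)
next
  case (Suc t)
  have "tensor_swap_overlap n (Suc t) \<psi> s = (\<Sum>a\<in>bits n. \<Sum>b\<in>bits n. \<Sum>r\<in>reg_bits n t.
      (\<psi> a * \<psi> b * cnj (\<psi> (mix_bits n s b a)) * cnj (\<psi> (mix_bits n s a b))) *
      (tensor_amp t \<psi> r * cnj (tensor_amp t \<psi> (swap_map n s r))))"
    unfolding tensor_swap_overlap_def sum_reg_bits_Suc
    by (simp add: swap_map_Cons2 tensor_amp_Cons2 algebra_simps)
  also have "\<dots> = (\<Sum>a\<in>bits n. \<Sum>b\<in>bits n.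
      (\<psi> a * \<psi> b * cnj (\<psi> (mix_bits n s b a)) * cnj (\<psi> (mix_bits n s a b))) * tensor_swap_overlap n t \<psi> s)"
    unfolding tensor_swap_overlap_def by (simp add: sum_distrib_left)
  also have "\<dots> = swap_overlap n \<psi> s * tensor_swap_overlap n t \<psi> s"
    unfolding swap_overlap_def by (simp add: sum_distrib_right)
  finally show ?case
    using Suc.IH by simp
qed

lemma sum_bits_merge_bits:
  assumes "s \<in> bits n"
  shows "(\<Sum>a\<in>bits n. f a) = (\<Sum>u\<in>sub_bits n s. \<Sum>w\<in>comp_bits n s. f (merge_bits u w))"
proof -
  define split where "split a = (map (\<lambda>j. a ! j \<and> s ! j) [0..<n], map (\<lambda>j. a ! j \<and> \<not> s ! j) [0..<n])" for a
  have "(\<Sum>(u, w)\<in>sub_bits n s \<times> comp_bits n s. f (merge_bits u w)) = (\<Sum>a\<in>bits n. f a)"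
  proof (rule sum.reindex_bij_witness[where i=split and j="\<lambda>(u, w). merge_bits u w"])
    fix uw assume "uw \<in> sub_bits n s \<times> comp_bits n s"
    then show "split (case uw of (u, w) \<Rightarrow> merge_bits u w) = uw"
      and "(case uw of (u, w) \<Rightarrow> merge_bits u w) \<in> bits n"
      by (auto simp: split_def merge_bits_def sub_bits_def comp_bits_def bits_def intro!: nth_equalityI)
  next
    fix a assume "a \<in> bits n"
    then show "(case split a of (u, w) \<Rightarrow> merge_bits u w) = a"
      and "split a \<in> sub_bits n s \<times> comp_bits n s"
      by (auto simp: split_def merge_bits_def sub_bits_def comp_bits_def bits_def intro!: nth_equalityI)
  qed (simp add: case_prod_beta)
  then show ?thesis
    by (simp add: sum.cartesian_product)
qed

lemma rho_hermitian: "rho n \<psi> s v u = cnj (rho n \<psi> s u v)"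
  unfolding rho_def by (simp add: mult.commute)

lemma rho_mult_rho_transpose: "rho n \<psi> s u v * rho n \<psi> s v u = of_real ((cmod (rho n \<psi> s u v))\<^sup>2)"
  by (subst rho_hermitian[of n \<psi> s v u]) (rule complex_norm_square[symmetric])

lemma purity_eq_sum_norm_rho:
  "purity n \<psi> s = (\<Sum>u\<in>sub_bits n s. \<Sum>v\<in>sub_bits n s. (cmod (rho n \<psi> s u v))\<^sup>2)"
  unfolding purity_def by (simp only: rho_mult_rho_transpose of_real_sum[symmetric] Re_complex_of_real)

text \<open>Split each string into its part on \<open>s\<close> and its part off \<open>s\<close>: \<open>SWAP\<^sub>s\<close> exchanges the
  parts on \<open>s\<close>, and the sums over the parts off \<open>s\<close> are the partial traces defining \<open>rho\<close>.\<close>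

lemma swap_overlap_eq_purity:
  assumes s: "s \<in> bits n"
  shows "swap_overlap n \<psi> s = of_real (purity n \<psi> s)"
proof -
  have mix_merge: "mix_bits n s (merge_bits v w') (merge_bits u w) = merge_bits v w"
    if "u \<in> sub_bits n s" "v \<in> sub_bits n s" "w \<in> comp_bits n s" "w' \<in> comp_bits n s" for u v w w'
    using that by (auto simp: mix_bits_def merge_bits_def sub_bits_def comp_bits_def bits_def intro!: nth_equalityI)
  have "swap_overlap n \<psi> s = (\<Sum>u\<in>sub_bits n s. \<Sum>w\<in>comp_bits n s. \<Sum>v\<in>sub_bits n s. \<Sum>w'\<in>comp_bits n s.
      (\<psi> (merge_bits u w) * cnj (\<psi> (merge_bits v w))) * (\<psi> (merge_bits v w') * cnj (\<psi> (merge_bits u w'))))"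
    unfolding swap_overlap_def sum_bits_merge_bits[OF s]
    by (intro sum.cong refl) (simp add: mix_merge algebra_simps)
  also have "\<dots> = (\<Sum>u\<in>sub_bits n s. \<Sum>v\<in>sub_bits n s. \<Sum>w\<in>comp_bits n s. \<Sum>w'\<in>comp_bits n s.
      (\<psi> (merge_bits u w) * cnj (\<psi> (merge_bits v w))) * (\<psi> (merge_bits v w') * cnj (\<psi> (merge_bits u w'))))"
    by (rule sum.cong[OF refl]) (rule sum.swap)
  also have "\<dots> = (\<Sum>u\<in>sub_bits n s. \<Sum>v\<in>sub_bits n s. rho n \<psi> s u v * rho n \<psi> s v u)"
    by (simp add: rho_def sum_product)
  also have "\<dots> = (\<Sum>u\<in>sub_bits n s. \<Sum>v\<in>sub_bits n s. of_real ((cmod (rho n \<psi> s u v))\<^sup>2))"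
    by (simp only: rho_mult_rho_transpose)
  finally show ?thesis
    by (simp add: purity_eq_sum_norm_rho)
qed

lemma purity_empty_subsystem:
  assumes "pure_state n \<psi>"
  shows "purity n \<psi> (replicate n False) = 1"
proof -
  have norm: "(\<Sum>a\<in>bits n. \<psi> a * cnj (\<psi> a)) = 1"
    using assms unfolding pure_state_def
    by (simp only: complex_norm_square[symmetric] of_real_sum[symmetric]) simp
  have "swap_overlap n \<psi> (replicate n False) =
      (\<Sum>a\<in>bits n. \<Sum>b\<in>bits n. (\<psi> a * cnj (\<psi> a)) * (\<psi> b * cnj (\<psi> b)))"
    unfolding swap_overlap_def by (intro sum.cong refl) (simp add: mix_bits_zero bits_def algebra_simps)
  also have "\<dots> = 1"
    by (simp only: sum_product[symmetric] norm) simp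
  finally show ?thesis
    using swap_overlap_eq_purity[OF zero_bits] by simp
qed

section \<open>The output distribution\<close>

lemma of_real_hidden_cut_dist:
  "of_real (hidden_cut_dist n t \<psi> x) =
    (\<Sum>rs\<in>reg_bits n t. final_state n t \<psi> x rs * cnj (final_state n t \<psi> x rs))"
  unfolding hidden_cut_dist_def of_real_sum complex_norm_square ..

lemma sum_walsh_hidden_cut_dist:
  assumes s: "s \<in> bits n"
  shows "(\<Sum>x\<in>bits n. hidden_cut_dist n t \<psi> x * walsh x s) = purity n \<psi> s ^ t"
proof -
  let ?F = "final_state n t \<psi>" and ?A = "\<lambda>rs. tensor_amp t \<psi> rs"
  have "complex_of_real (\<Sum>x\<in>bits n. hidden_cut_dist n t \<psi> x * walsh x s)
      = (\<Sum>rs\<in>reg_bits n t. \<Sum>x\<in>bits n. of_real (walsh x s) * (?F x rs * cnj (?F x rs)))"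
    unfolding of_real_sum of_real_mult of_real_hidden_cut_dist sum_distrib_right
    by (subst sum.swap) (simp add: ac_simps)
  also have "\<dots> = of_real (1 / 2 ^ n) *
      (\<Sum>g\<in>bits n. \<Sum>rs\<in>reg_bits n t. ?A (swap_map n g rs) * cnj (?A (swap_map n s (swap_map n g rs))))"
    using s by (simp add: sum_walsh_final_state_sq sum_distrib_left sum.swap[of _ "reg_bits n t"])
  also have "\<dots> = of_real (1 / 2 ^ n) * (\<Sum>g\<in>bits n. tensor_swap_overlap n t \<psi> s)"
  proof (intro arg_cong2[where f="(*)"] sum.cong refl)
    fix g assume g: "g \<in> bits n"
    show "(\<Sum>rs\<in>reg_bits n t. ?A (swap_map n g rs) * cnj (?A (swap_map n s (swap_map n g rs))))
        = tensor_swap_overlap n t \<psi> s"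
      unfolding tensor_swap_overlap_def
      by (rule sum.reindex_bij_witness[where i="swap_map n g" and j="swap_map n g"])
         (auto simp: swap_map_involution[OF _ g] swap_map_reg_bits)
  qed
  also have "\<dots> = of_real (purity n \<psi> s ^ t)"
    by (simp add: card_bits tensor_swap_overlap_eq_power swap_overlap_eq_purity[OF s])
  finally show ?thesis
    using of_real_eq_iff by blast
qed

theorem mainTheorem7:
  fixes n t :: nat and \<psi> :: "bool list \<Rightarrow> complex" and s :: "bool list"
  assumes "pure_state n \<psi>" and "t \<ge> 1" and "s \<in> bits n"
  shows "(\<Sum>x\<in>bits n. hidden_cut_dist n t \<psi> x * real (dot2 x s))
           = (1 - purity n \<psi> s ^ t) / 2"
proof -
  \<comment> \<open>The identity also holds for \<open>t = 0\<close>.\<close>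
  let ?p = "hidden_cut_dist n t \<psi>"
  have total: "(\<Sum>x\<in>bits n. ?p x) = 1"
    using sum_walsh_hidden_cut_dist[OF zero_bits, where t=t and \<psi>=\<psi>]
    by (simp add: purity_empty_subsystem[OF assms(1)] walsh_zero cong: sum.cong)
  have "(\<Sum>x\<in>bits n. ?p x * real (dot2 x s)) = ((\<Sum>x\<in>bits n. ?p x) - (\<Sum>x\<in>bits n. ?p x * walsh x s)) / 2"
    by (simp add: dot2_eq_walsh sum_subtractf sum_divide_distrib[symmetric] right_diff_distrib)
  then show ?thesis
    by (simp add: total sum_walsh_hidden_cut_dist[OF assms(3)])
qed

end
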